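(* Let $\Pi=(\mathsf A,\mathsf B)$ be a protocol. Then for every $\delta\in(0,\frac12]$ there exists a constant $c=c(\delta)>0$ (depending only on $\delta$) such that for every $\delta'\ge\delta$ and $\gamma>1$: $$\Pr_{\ell\leftarrow L_{(\mathsf A^{(1)}_\Pi,\mathsf B)}}\Big[\ell\in\mathrm{desc}\big(\mathrm{Unbal}_\Pi(\gamma)\setminus\overline{\mathrm{desc}}(\mathrm{Low}_\Pi(\delta',\mathsf A))\big)\Big]\le\frac{2}{\gamma^{c}}.$$
   Context: An $m$-round single-bit-message protocol $\Pi$ is identified with the complete binary tree of height $m$ (nodes are binary strings, leaves of length $m$), with control scheme, edge probabilities, output $\chi_\Pi:\text{leaves}\to\{0,1\}$, visit probabilities $v_\Pi(u)$, leaf distribution $L_\Pi$; $\Pi_u$ is the subprotocol under node $u$ and $\mathrm{val}(\Pi_u)$ its expected output (taken $0$ if $v_\Pi(u)=0$). The biased-continuation attacker $\mathsf A^{(1)}_\Pi$: at an $\mathsf A$-controlled node $u$ it samples $\ell\leftarrow L_\Pi$ conditioned on $\ell$ extending $u$ and $\chi_\Pi(\ell)=1$ (an arbitrary leaf under $u$ if impossible) and sends $\ell_{|u|+1}$. $\mathrm{Unbal}_\Pi(\gamma)=\{u\text{ non-leaf}: v_{(\mathsf A^{(1)}_\Pi,\mathsf B)}(u)\ge\gamma\cdot v_\Pi(u)\}$. $\mathrm{Low}_\Pi(\delta,\mathsf A)=\{u\text{ non-leaf, controlled by }\mathsf A:\mathrm{val}(\Pi_u)\le\delta\}$. $\mathrm{desc}(\mathcal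 S)$ is the set of nodes with an ancestor (possibly itself) in $\mathcal S$; $\overline{\mathrm{desc}}(\mathcal S)=\bigcup_{u\in\mathcal S}(\text{descendants of }u\text{ other than }u)$. *)

theory Defs
  imports Complex_Main "HOL-Library.Sublist"
begin

text \<open>An m-round single-bit-message protocol, identified with the complete binary
tree of height m.  Nodes are bool lists of length at most m, leaves have length m,
the children of u are u @ [False] and u @ [True].
  ctrlA u   : node u is controlled by party A (otherwise by B);
  eprob u   : probability of the edge from u to u @ [True] (edge to u @ [False]
              has probability 1 - eprob u);
  out l     : output of leaf l (True = 1).\<close>

record proto =
  depth :: nat
  ctrlA :: "bool list \<Rightarrow> bool"
  eprob :: "bool list \<Rightarrow> real"
  out   :: "bool list \<Rightarrow> bool"

definition valid_proto :: "proto \<Rightarrow> bool" where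
  "valid_proto P \<longleftrightarrow> (\<forall>u. length u < depth P \<longrightarrow> 0 \<le> eprob P u \<and> eprob P u \<le> 1)"

definition nodes :: "proto \<Rightarrow> bool list set" where
  "nodes P = {u. length u \<le> depth P}"

definition leaves :: "proto \<Rightarrow> bool list set" where
  "leaves P = {l. length l = depth P}"

definition leaves_under :: "proto \<Rightarrow> bool list \<Rightarrow> bool list set" where
  "leaves_under P u = {l. length l = depth P \<and> prefix u l}"

definition edge :: "(bool list \<Rightarrow> real) \<Rightarrow> bool list \<Rightarrow> bool \<Rightarrow> real" where
  "edge q u b = (if b then q u else 1 - q u)"

definition visit_q :: "(bool list \<Rightarrow> real) \<Rightarrow> bool list \<Rightarrow> real" where
  "visit_q q u = (\<Prod>i<length u. edge q (take i u) (u ! i))"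

definition visit :: "proto \<Rightarrow> bool list \<Rightarrow> real" where
  "visit P u = visit_q (eprob P) u"

text \<open>Expected output of the subprotocol P_u (0 if v_P(u) = 0): probability of
reaching leaf l from u, times output.\<close>
definition val :: "proto \<Rightarrow> bool list \<Rightarrow> real" where
  "val P u = (if visit P u = 0 then 0 else
     (\<Sum>l\<in>leaves_under P u.
        (\<Prod>i\<in>{length u..<depth P}. edge (eprob P) (take i l) (l ! i))
        * (if out P l then 1 else 0)))"

definition win_mass :: "proto \<Rightarrow> bool list \<Rightarrow> real" where
  "win_mass P u = (\<Sum>l\<in>leaves_under P u. visit P l * (if out P l then 1 else 0))"

text \<open>Edge probabilities of the execution (A^(1)_P, B) of the biased-continuation
attacker against honest B.  At an A-controlled node u it samples a leaf from L_P
conditioned on extending u and having output 1 and sends its next bit; if this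
conditioning is impossible, it uses an arbitrary leaf under u, modelled by an
arbitrary (possibly randomized) fallback fb u = probability of sending True.\<close>
definition att_eprob :: "proto \<Rightarrow> (bool list \<Rightarrow> real) \<Rightarrow> bool list \<Rightarrow> real" where
  "att_eprob P fb u =
     (if ctrlA P u then
        (if win_mass P u = 0 then fb u else win_mass P (u @ [True]) / win_mass P u)
      else eprob P u)"

definition visit_att :: "proto \<Rightarrow> (bool list \<Rightarrow> real) \<Rightarrow> bool list \<Rightarrow> real" where
  "visit_att P fb u = visit_q (att_eprob P fb) u"

definition Unbal :: "proto \<Rightarrow> (bool list \<Rightarrow> real) \<Rightarrow> real \<Rightarrow> bool list set" where
  "Unbal P fb \<gamma> = {u. length u < depth P \<and> visit_att P fb u \<ge> \<gamma> * visit P u}"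

definition Low :: "proto \<Rightarrow> real \<Rightarrow> bool list set" where
  "Low P \<delta> = {u. length u < depth P \<and> ctrlA P u \<and> val P u \<le> \<delta>}"

definition desc :: "proto \<Rightarrow> bool list set \<Rightarrow> bool list set" where
  "desc P S = {x \<in> nodes P. \<exists>u\<in>S. prefix u x}"

definition descbar :: "proto \<Rightarrow> bool list set \<Rightarrow> bool list set" where
  "descbar P S = {x \<in> nodes P. \<exists>u\<in>S. strict_prefix u x}"

end

theory Submission
  imports Defs "HOL-Analysis.Convex"
begin

text \<open>
  Take c = \<delta>/2 and consider, along the attacked execution, the potential
  vA(u) * (vA(u) / v(u)) powr c * (2 - val(u)), where v and vA are the honest and
  attacked visit probabilities.  At B-nodes both executions branch alike and val(u) is
  the average of the children's values, so the potential is preserved.  At an A-node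
  with val(u) = x > \<delta> \<ge> 2c the attacker moves to a child of value y with its honest
  probability scaled by y/x; the children's contributions are controlled by the bound
  (y/x) powr (1 + c) * (2 - y) \<le> (2 - x) + D (y - x) for all y \<in> [0,1], with D
  independent of y, and averaging over the children kills the linear term.  So the
  potential is a supermartingale as long as the execution has not passed a node of Low.
  At a node of Unbal(\<gamma>) the ratio vA/v is at least \<gamma>, so the potential is at least
  \<gamma> powr c * vA(u).  Stopping at the first such node therefore bounds the attacked
  probability of reaching one by the root potential, at most 2, divided by \<gamma> powr c.
\<close>

lemma edge_False_add_True: "edge q u False + edge q u True = 1"
  by (simp add: edge_def)

lemma visit_q_snoc: "visit_q q (u @ [b]) = visit_q q u * edge q u b"
proof -
  have "(\<Prod>i<length u. edge q (take i (u @ [b])) ((u @ [b]) ! i)) = visit_q q u"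
    unfolding visit_q_def by (rule prod.cong) (auto simp: nth_append)
  then show ?thesis unfolding visit_q_def by (simp add: mult.commute)
qed

lemma visit_q_prefix:
  assumes "prefix u l"
  shows "visit_q q l = visit_q q u * (\<Prod>i\<in>{length u..<length l}. edge q (take i l) (l ! i))"
proof -
  obtain zs where l: "l = u @ zs" using assms prefix_def by blast
  then have "{..<length l} = {..<length u} \<union> {length u..<length l}" by auto
  then have "visit_q q l = (\<Prod>i<length u. edge q (take i l) (l ! i))
      * (\<Prod>i\<in>{length u..<length l}. edge q (take i l) (l ! i))"
    unfolding visit_q_def by (simp add: prod.union_disjoint ivl_disj_int_one(2))
  moreover have "(\<Prod>i<length u. edge q (take i l) (l ! i)) = visit_q q u"
    unfolding visit_q_def l by (rule prod.cong) (auto simp: nth_append)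
  ultimately show ?thesis by simp
qed

lemma visit_q_nonneg:
  assumes "\<forall>v. length v < n \<longrightarrow> 0 \<le> q v \<and> q v \<le> 1" and "length u \<le> n"
  shows "0 \<le> visit_q q u"
  unfolding visit_q_def using assms by (auto intro!: prod_nonneg simp: edge_def)

lemma finite_leaves_under: "finite (leaves_under P u)"
proof (rule finite_subset)
  show "leaves_under P u \<subseteq> {xs. set xs \<subseteq> UNIV \<and> length xs = depth P}"
    unfolding leaves_under_def by auto
qed (rule finite_lists_length_eq, simp)

lemma leaves_under_leaf: "length u = depth P \<Longrightarrow> leaves_under P u = {u}"
  unfolding leaves_under_def prefix_def by auto

lemma leaves_under_eq_Un_snoc:
  assumes "length u < depth P"
  shows "leaves_under P u = leaves_under P (u @ [False]) \<union> leaves_under P (u @ [True])"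
proof
  show "leaves_under P u \<subseteq> leaves_under P (u @ [False]) \<union> leaves_under P (u @ [True])"
  proof
    fix l assume "l \<in> leaves_under P u"
    then have l: "length l = depth P" "prefix u l" unfolding leaves_under_def by auto
    then obtain z zs where "l = u @ z # zs"
      using assms by (metis prefixE append_Nil2 less_irrefl list.exhaust)
    then show "l \<in> leaves_under P (u @ [False]) \<union> leaves_under P (u @ [True])"
      using l unfolding leaves_under_def by (cases z) auto
  qed
qed (auto simp: leaves_under_def intro: prefix_order.trans[of u "u @ [_]"])

lemma leaves_under_snoc_disjoint: "leaves_under P (u @ [False]) \<inter> leaves_under P (u @ [True]) = {}"
  unfolding leaves_under_def prefix_def by auto

lemma sum_leaves_under_split:
  assumes "length u < depth P"
  shows "(\<Sum>l\<in>leaves_under P u. f l)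
    = (\<Sum>l\<in>leaves_under P (u @ [False]). f l) + (\<Sum>l\<in>leaves_under P (u @ [True]). f l)"
  using leaves_under_eq_Un_snoc[OF assms] leaves_under_snoc_disjoint finite_leaves_under
  by (simp add: sum.union_disjoint)

lemma sum_visit_q_leaves_under:
  "length u \<le> depth P \<Longrightarrow> (\<Sum>l\<in>leaves_under P u. visit_q q l) = visit_q q u"
proof (induction "depth P - length u" arbitrary: u)
  case 0
  then show ?case by (simp add: leaves_under_leaf)
next
  case (Suc k)
  then have "(\<Sum>l\<in>leaves_under P u. visit_q q l) = visit_q q (u @ [False]) + visit_q q (u @ [True])"
    by (simp add: sum_leaves_under_split)
  also have "\<dots> = visit_q q u" by (simp add: visit_q_snoc edge_def algebra_simps)
  finally show ?case .
qed

lemma visit_snoc: "visit P (u @ [b]) = visit P u * edge (eprob P) u b"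
  unfolding visit_def by (rule visit_q_snoc)

lemma visit_att_snoc: "visit_att P fb (u @ [b]) = visit_att P fb u * edge (att_eprob P fb) u b"
  unfolding visit_att_def by (rule visit_q_snoc)

lemma visit_nonneg: "valid_proto P \<Longrightarrow> length u \<le> depth P \<Longrightarrow> 0 \<le> visit P u"
  unfolding visit_def valid_proto_def by (rule visit_q_nonneg) auto

lemma win_mass_split:
  "length u < depth P \<Longrightarrow> win_mass P u = win_mass P (u @ [False]) + win_mass P (u @ [True])"
  unfolding win_mass_def by (rule sum_leaves_under_split)

lemma win_mass_nonneg: "valid_proto P \<Longrightarrow> 0 \<le> win_mass P u"
  unfolding win_mass_def leaves_under_def by (auto intro!: sum_nonneg visit_nonneg)

lemma win_mass_le_visit:
  assumes "valid_proto P" and "length u \<le> depth P"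
  shows "win_mass P u \<le> visit P u"
proof -
  have "win_mass P u \<le> (\<Sum>l\<in>leaves_under P u. visit P l)"
    unfolding win_mass_def using assms
    by (intro sum_mono) (auto simp: leaves_under_def intro: visit_nonneg)
  also have "\<dots> = visit P u" unfolding visit_def using assms(2) by (rule sum_visit_q_leaves_under)
  finally show ?thesis .
qed

lemma win_mass_eq_visit_mult_val: "win_mass P u = visit P u * val P u"
proof (cases "visit P u = 0")
  case True
  have "win_mass P u = 0" unfolding win_mass_def
    by (rule sum.neutral) (auto simp: leaves_under_def visit_def visit_q_prefix True[unfolded visit_def])
  then show ?thesis using True by simp
next
  case False
  have "win_mass P u = (\<Sum>l\<in>leaves_under P u. visit P u *
      ((\<Prod>i\<in>{length u..<depth P}. edge (eprob P) (take i l) (l ! i)) * (if out P l then 1 else 0)))"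
    unfolding win_mass_def by (rule sum.cong) (auto simp: leaves_under_def visit_def visit_q_prefix)
  then show ?thesis using False unfolding val_def by (simp add: sum_distrib_left)
qed

lemma val_bounds:
  assumes "valid_proto P" and "length u \<le> depth P"
  shows "0 \<le> val P u" and "val P u \<le> 1"
proof -
  have "0 \<le> val P u \<and> val P u \<le> 1"
  proof (cases "visit P u = 0")
    case True
    then show ?thesis by (simp add: val_def)
  next
    case False
    then have "0 < visit P u" using visit_nonneg[OF assms] by simp
    moreover have "val P u = win_mass P u / visit P u"
      using False by (simp add: win_mass_eq_visit_mult_val)
    ultimately show ?thesis using win_mass_nonneg[OF assms(1)] win_mass_le_visit[OF assms]
      by (simp add: divide_le_eq_1)
  qed
  then show "0 \<le> val P u" "val P u \<le> 1" by auto
qed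

lemma val_eq_average_snoc:
  assumes "length u < depth P" and "visit P u \<noteq> 0"
  shows "val P u = edge (eprob P) u False * val P (u @ [False]) + edge (eprob P) u True * val P (u @ [True])"
proof -
  have "visit P u * val P u = visit P u * (edge (eprob P) u False * val P (u @ [False])
      + edge (eprob P) u True * val P (u @ [True]))"
    using win_mass_split[OF assms(1)]
    by (simp add: win_mass_eq_visit_mult_val visit_snoc algebra_simps)
  then show ?thesis using assms(2) by simp
qed

lemma att_eprob_bounds:
  assumes "valid_proto P" and "\<forall>u. length u < depth P \<longrightarrow> 0 \<le> fb u \<and> fb u \<le> 1"
    and "length u < depth P"
  shows "0 \<le> att_eprob P fb u \<and> att_eprob P fb u \<le> 1"
  using assms win_mass_split[OF assms(3)]
    win_mass_nonneg[OF assms(1), of "u @ [False]"] win_mass_nonneg[OF assms(1), of "u @ [True]"]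
  unfolding att_eprob_def valid_proto_def by (auto simp: divide_le_eq_1)

lemma visit_att_nonneg:
  assumes "valid_proto P" and "\<forall>u. length u < depth P \<longrightarrow> 0 \<le> fb u \<and> fb u \<le> 1"
    and "length u \<le> depth P"
  shows "0 \<le> visit_att P fb u"
  unfolding visit_att_def using att_eprob_bounds[OF assms(1,2)] assms(3)
  by (intro visit_q_nonneg) auto

lemma edge_att_eprob_ctrlA:
  assumes "ctrlA P u" and "win_mass P u \<noteq> 0" and "length u < depth P"
  shows "edge (att_eprob P fb) u b = win_mass P (u @ [b]) / win_mass P u"
  using assms win_mass_split[OF assms(3)]
  by (cases b) (auto simp: att_eprob_def edge_def field_simps)

lemma edge_att_eprob_ctrlB: "\<not> ctrlA P u \<Longrightarrow> edge (att_eprob P fb) u b = edge (eprob P) u b"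
  unfolding att_eprob_def edge_def by auto

lemma Bernoulli_powr_le:
  fixes t c :: real
  assumes "0 \<le> t" and "0 \<le> c" and "c \<le> 1"
  shows "t powr c \<le> 1 + c * (t - 1)"
proof (cases "t = 0")
  case True
  then show ?thesis using assms by simp
next
  case False
  have "t powr c * 1 powr (1 - c) \<le> c * t + (1 - c) * 1"
    using assms False by (intro Youngs_inequality_0) auto
  then show ?thesis by (simp add: algebra_simps)
qed

lemma ratio_potential_le_tangent:
  fixes c x y :: real
  assumes "0 \<le> y" "y \<le> 1" "0 < c" "c \<le> 1" "2 * c \<le> x" "x \<le> 1"
  shows "(y / x) * (y / x) powr c * (2 - y) \<le> (x\<^sup>2 * (2 - x) + ((1 + c) * x * (2 - x) - x\<^sup>2) * (y - x)) / x\<^sup>2"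
proof -
  have x: "0 < x" using assms by simp
  have "(y / x) * (y / x) powr c * (2 - y) \<le> (y / x) * (1 + c * (y / x - 1)) * (2 - y)"
    using assms x by (intro mult_right_mono mult_left_mono Bernoulli_powr_le) auto
  also have "\<dots> = y * (x + c * (y - x)) * (2 - y) / x\<^sup>2"
    using x by (simp add: field_simps power2_eq_square)
  also have "\<dots> \<le> (x\<^sup>2 * (2 - x) + ((1 + c) * x * (2 - x) - x\<^sup>2) * (y - x)) / x\<^sup>2"
  proof (rule divide_right_mono)
    have "y * (x + c * (y - x)) * (2 - y) - x\<^sup>2 * (2 - x) - ((1 + c) * x * (2 - x) - x\<^sup>2) * (y - x)
        = (y - x)\<^sup>2 * (2 * c - (1 + c) * x - c * y)"
      by (simp add: power2_eq_square algebra_simps)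
    moreover have "(y - x)\<^sup>2 * (2 * c - (1 + c) * x - c * y) \<le> 0"
      using assms x by (intro mult_nonneg_nonpos) (auto intro: add_increasing2 simp: algebra_simps)
    ultimately show "y * (x + c * (y - x)) * (2 - y) \<le> x\<^sup>2 * (2 - x) + ((1 + c) * x * (2 - x) - x\<^sup>2) * (y - x)"
      by linarith
  qed simp
  finally show ?thesis .
qed

lemma ratio_potential_average_le:
  fixes c x e0 e1 y0 y1 :: real
  assumes "0 < c" "c \<le> 1" "2 * c \<le> x" "x \<le> 1" "0 \<le> e0" "0 \<le> e1" "e0 + e1 = 1"
    "0 \<le> y0" "y0 \<le> 1" "0 \<le> y1" "y1 \<le> 1" "e0 * y0 + e1 * y1 = x"
  shows "e0 * ((y0 / x) * (y0 / x) powr c * (2 - y0)) + e1 * ((y1 / x) * (y1 / x) powr c * (2 - y1)) \<le> 2 - x"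
proof -
  define D where "D = (1 + c) * x * (2 - x) - x\<^sup>2"
  have "e0 * ((y0 / x) * (y0 / x) powr c * (2 - y0)) + e1 * ((y1 / x) * (y1 / x) powr c * (2 - y1))
      \<le> e0 * ((x\<^sup>2 * (2 - x) + D * (y0 - x)) / x\<^sup>2) + e1 * ((x\<^sup>2 * (2 - x) + D * (y1 - x)) / x\<^sup>2)"
    unfolding D_def using assms by (intro add_mono mult_left_mono ratio_potential_le_tangent) auto
  also have "\<dots> = ((e0 + e1) * (x\<^sup>2 * (2 - x)) + D * ((e0 * y0 + e1 * y1) - (e0 + e1) * x)) / x\<^sup>2"
    by (simp add: add_divide_distrib[symmetric] algebra_simps)
  also have "\<dots> = 2 - x" using assms by simp
  finally show ?thesis .
qed

text \<open>Where visit P u = 0 the potential vanishes, because x / 0 = 0 and 0 powr c = 0.\<close>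

definition potential :: "proto \<Rightarrow> (bool list \<Rightarrow> real) \<Rightarrow> real \<Rightarrow> bool list \<Rightarrow> real" where
  "potential P fb c u = visit_att P fb u * (visit_att P fb u / visit P u) powr c * (2 - val P u)"

lemma potential_nonneg:
  assumes "valid_proto P" and "\<forall>u. length u < depth P \<longrightarrow> 0 \<le> fb u \<and> fb u \<le> 1"
    and "length u \<le> depth P"
  shows "0 \<le> potential P fb c u"
  using visit_att_nonneg[OF assms] val_bounds[OF assms(1,3)] unfolding potential_def by auto

lemma potential_snoc_ctrlB:
  assumes "\<not> ctrlA P u" and "visit P u \<noteq> 0"
  shows "potential P fb c (u @ [b]) = visit_att P fb u * (visit_att P fb u / visit P u) powr c
    * (edge (eprob P) u b * (2 - val P (u @ [b])))"
proof (cases "edge (eprob P) u b = 0")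
  case True
  then show ?thesis by (simp add: potential_def visit_snoc)
next
  case False
  then have "visit_att P fb (u @ [b]) / visit P (u @ [b]) = visit_att P fb u / visit P u"
    using assms by (simp add: visit_snoc visit_att_snoc edge_att_eprob_ctrlB)
  then show ?thesis
    using assms by (simp add: potential_def visit_att_snoc edge_att_eprob_ctrlB)
qed

lemma potential_snoc_ctrlA:
  assumes "length u < depth P" and "ctrlA P u" and "visit P u \<noteq> 0" and "val P u \<noteq> 0"
  shows "potential P fb c (u @ [b]) = visit_att P fb u * (visit_att P fb u / visit P u) powr c
    * (edge (eprob P) u b * ((val P (u @ [b]) / val P u) * (val P (u @ [b]) / val P u) powr c
        * (2 - val P (u @ [b]))))"
proof (cases "edge (eprob P) u b = 0")
  case True
  then show ?thesis by (simp add: potential_def visit_snoc)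
next
  case False
  define y where "y = val P (u @ [b]) / val P u"
  have "edge (att_eprob P fb) u b = edge (eprob P) u b * y"
    using edge_att_eprob_ctrlA[OF assms(2) _ assms(1)] assms(3,4) unfolding y_def
    by (simp add: win_mass_eq_visit_mult_val visit_snoc)
  then have "potential P fb c (u @ [b]) = visit_att P fb u * (edge (eprob P) u b * y)
      * ((visit_att P fb u / visit P u) powr c * y powr c) * (2 - val P (u @ [b]))"
    using False by (simp add: potential_def visit_snoc visit_att_snoc powr_mult[symmetric])
  then show ?thesis unfolding y_def[symmetric] by (simp add: ac_simps)
qed

definition no_Low_ancestor :: "proto \<Rightarrow> real \<Rightarrow> bool list \<Rightarrow> bool" where
  "no_Low_ancestor P \<delta> u \<longleftrightarrow> (\<forall>a. strict_prefix a u \<longrightarrow> a \<notin> Low P \<delta>)"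

lemma no_Low_ancestor_snoc:
  "no_Low_ancestor P \<delta> (u @ [b]) \<longleftrightarrow> no_Low_ancestor P \<delta> u \<and> u \<notin> Low P \<delta>"
proof -
  have "strict_prefix a (u @ [b]) \<longleftrightarrow> prefix a u" for a
    by (auto simp: strict_prefix_def)
  then show ?thesis
    unfolding no_Low_ancestor_def by (metis prefix_order.le_less)
qed

lemma potential_snoc_sum_le:
  assumes "valid_proto P" and "\<forall>u. length u < depth P \<longrightarrow> 0 \<le> fb u \<and> fb u \<le> 1"
    and "0 < c" "c \<le> 1" "2 * c \<le> \<delta>"
    and "length u < depth P" and "u \<notin> Low P \<delta>"
  shows "potential P fb c (u @ [False]) + potential P fb c (u @ [True]) \<le> potential P fb c u"
proof (cases "visit P u = 0")
  case True
  then show ?thesis by (simp add: potential_def visit_snoc)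
next
  case False
  define A where "A = visit_att P fb u * (visit_att P fb u / visit P u) powr c"
  define x where "x = val P u"
  define e where "e = edge (eprob P) u"
  define y where "y b = val P (u @ [b])" for b
  have A: "0 \<le> A" unfolding A_def using visit_att_nonneg[OF assms(1,2)] assms(6) by simp
  have e: "0 \<le> e b" "e False + e True = 1" for b
    using assms(1,6) edge_False_add_True unfolding e_def by (auto simp: edge_def valid_proto_def)
  have y: "0 \<le> y b" "y b \<le> 1" for b unfolding y_def using val_bounds[OF assms(1)] assms(6) by auto
  have x_avg: "x = e False * y False + e True * y True"
    unfolding x_def e_def y_def using val_eq_average_snoc[OF assms(6) False] .
  have x_le: "x \<le> 1" unfolding x_def using val_bounds(2)[OF assms(1)] assms(6) by simp
  have pot_u: "potential P fb c u = A * (2 - x)" unfolding potential_def A_def x_def ..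
  show ?thesis
  proof (cases "ctrlA P u")
    case False
    have "potential P fb c (u @ [b]) = A * (e b * (2 - y b))" for b
      using potential_snoc_ctrlB[OF False \<open>visit P u \<noteq> 0\<close>] unfolding A_def e_def y_def .
    then have "potential P fb c (u @ [False]) + potential P fb c (u @ [True])
        = A * (2 * (e False + e True) - (e False * y False + e True * y True))"
      by (simp add: algebra_simps)
    then show ?thesis using e x_avg pot_u by simp
  next
    case True
    define g where "g b = (y b / x) * (y b / x) powr c * (2 - y b)" for b
    have "\<delta> < x" using True assms(6,7) unfolding Low_def x_def by auto
    then have "e False * g False + e True * g True \<le> 2 - x"
      unfolding g_def using assms(3-5) e x_avg x_le y by (intro ratio_potential_average_le) auto
    moreover have "potential P fb c (u @ [b]) = A * (e b * g b)" for b
      using potential_snoc_ctrlA[OF assms(6) True False] \<open>\<delta> < x\<close> assms(3,5)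
      unfolding A_def g_def e_def x_def y_def by simp
    ultimately show ?thesis
      using pot_u mult_left_mono[OF _ A] by (simp add: distrib_left[symmetric])
  qed
qed

text \<open>
  Every node that the honest execution reaches with probability 0 lies in Unbal; the
  attacker never reaches such a node before passing through Low, as it only picks
  children of positive value.
\<close>

lemma visit_att_eq_0_if_visit_eq_0:
  assumes "valid_proto P" and "0 \<le> \<delta>"
  shows "length u \<le> depth P \<Longrightarrow> no_Low_ancestor P \<delta> u \<Longrightarrow> visit P u = 0 \<Longrightarrow> visit_att P fb u = 0"
proof (induction u rule: rev_induct)
  case Nil
  then show ?case by (simp add: visit_def visit_q_def)
next
  case (snoc b u)
  then have u: "no_Low_ancestor P \<delta> u" "u \<notin> Low P \<delta>" "length u < depth P"
    using no_Low_ancestor_snoc by auto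
  show ?case
  proof (cases "visit P u = 0")
    case True
    then show ?thesis using snoc.IH u by (simp add: visit_att_snoc)
  next
    case False
    then have e: "edge (eprob P) u b = 0" using snoc.prems(3) by (simp add: visit_snoc)
    show ?thesis
    proof (cases "ctrlA P u")
      case False
      then show ?thesis by (simp add: visit_att_snoc edge_att_eprob_ctrlB e)
    next
      case True
      then have "\<delta> < val P u" using u unfolding Low_def by auto
      then have "win_mass P u \<noteq> 0" using False assms(2) by (simp add: win_mass_eq_visit_mult_val)
      moreover have "win_mass P (u @ [b]) = 0"
        using snoc.prems(3) by (simp add: win_mass_eq_visit_mult_val)
      ultimately show ?thesis using True u by (simp add: visit_att_snoc edge_att_eprob_ctrlA)
    qed
  qed
qed

lemma visit_att_le_potential_if_Unbal:
  assumes "valid_proto P" and "\<forall>u. length u < depth P \<longrightarrow> 0 \<le> fb u \<and> fb u \<le> 1"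
    and "0 \<le> \<delta>" and "0 < c" and "0 < \<gamma>"
    and "u \<in> Unbal P fb \<gamma>" and "no_Low_ancestor P \<delta> u"
  shows "visit_att P fb u \<le> potential P fb c u / \<gamma> powr c"
proof -
  have u: "length u < depth P" "\<gamma> * visit P u \<le> visit_att P fb u" using assms(6) unfolding Unbal_def by auto
  have va: "0 \<le> visit_att P fb u" using visit_att_nonneg[OF assms(1,2)] u(1) by simp
  show ?thesis
  proof (cases "visit P u = 0")
    case True
    then show ?thesis using visit_att_eq_0_if_visit_eq_0[OF assms(1,3)] assms(7) u(1)
        potential_nonneg[OF assms(1,2)] by simp
  next
    case False
    then have "0 < visit P u" using visit_nonneg[OF assms(1)] u(1) by (simp add: order_less_le)
    then have "\<gamma> powr c \<le> (visit_att P fb u / visit P u) powr c"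
      using u assms(4,5) by (intro powr_mono2) (auto simp: field_simps)
    then have "visit_att P fb u * \<gamma> powr c \<le> visit_att P fb u * (visit_att P fb u / visit P u) powr c * 1"
      using va by (simp add: mult_left_mono)
    also have "\<dots> \<le> potential P fb c u"
      unfolding potential_def using va val_bounds(2)[OF assms(1)] u(1)
      by (intro mult_left_mono) auto
    finally have "visit_att P fb u * \<gamma> powr c \<le> potential P fb c u" .
    then show ?thesis using assms(5) by (simp add: field_simps)
  qed
qed

definition hit_leaves :: "proto \<Rightarrow> bool list set \<Rightarrow> bool list \<Rightarrow> bool list set" where
  "hit_leaves P G u = {l \<in> leaves_under P u. \<exists>v\<in>G. prefix u v \<and> prefix v l}"

lemma finite_hit_leaves: "finite (hit_leaves P G u)"
  unfolding hit_leaves_def using finite_leaves_under by simp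

lemma sum_hit_leaves_le_visit_att:
  assumes "valid_proto P" and "\<forall>u. length u < depth P \<longrightarrow> 0 \<le> fb u \<and> fb u \<le> 1"
    and "length u \<le> depth P"
  shows "(\<Sum>l\<in>hit_leaves P G u. visit_att P fb l) \<le> visit_att P fb u"
proof -
  have "(\<Sum>l\<in>hit_leaves P G u. visit_att P fb l) \<le> (\<Sum>l\<in>leaves_under P u. visit_att P fb l)"
    using visit_att_nonneg[OF assms(1,2)] finite_leaves_under
    by (intro sum_mono2) (auto simp: hit_leaves_def leaves_under_def)
  also have "\<dots> = visit_att P fb u" unfolding visit_att_def using assms(3) by (rule sum_visit_q_leaves_under)
  finally show ?thesis .
qed

lemma hit_leaves_eq_Un_snoc:
  assumes "u \<notin> G" and "length u < depth P"
  shows "hit_leaves P G u = hit_leaves P G (u @ [False]) \<union> hit_leaves P G (u @ [True])"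
proof -
  have "(\<exists>v\<in>G. prefix u v \<and> prefix v l) \<longleftrightarrow> (\<exists>v\<in>G. prefix (u @ [b]) v \<and> prefix v l)"
    if "prefix (u @ [b]) l" for l b
  proof
    assume "\<exists>v\<in>G. prefix u v \<and> prefix v l"
    then obtain v where v: "v \<in> G" "prefix u v" "prefix v l" by blast
    then obtain z zs where v_eq: "v = u @ z # zs"
      using assms(1) by (metis prefixE append_Nil2 list.exhaust)
    then have "prefix (u @ [z]) l" using v(3) prefix_order.trans[of "u @ [z]" v l] by simp
    then have "z = b" using that by (auto simp: prefix_def)
    moreover have "prefix (u @ [z]) v" using v_eq by simp
    ultimately show "\<exists>v\<in>G. prefix (u @ [b]) v \<and> prefix v l" using v by blast
  qed (meson prefix_order.trans prefixI)
  then show ?thesis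
    using leaves_under_eq_Un_snoc[OF assms(2)]
    unfolding hit_leaves_def leaves_under_def by blast
qed

lemma sum_hit_leaves_le_potential:
  assumes "valid_proto P" and "\<forall>u. length u < depth P \<longrightarrow> 0 \<le> fb u \<and> fb u \<le> 1"
    and "0 < c" "c \<le> 1" "2 * c \<le> \<delta>" and "0 < \<gamma>"
    and "G \<subseteq> Unbal P fb \<gamma>" and "G \<inter> descbar P (Low P \<delta>) = {}"
  shows "length u \<le> depth P \<Longrightarrow> no_Low_ancestor P \<delta> u \<Longrightarrow>
    (\<Sum>l\<in>hit_leaves P G u. visit_att P fb l) \<le> potential P fb c u / \<gamma> powr c"
proof (induction u rule: measure_induct_rule[where f = "\<lambda>u. depth P - length u"])
  case (less u)
  have pot: "0 \<le> potential P fb c u / \<gamma> powr c"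
    using potential_nonneg[OF assms(1,2) less.prems(1)] by simp
  consider (hit) "u \<in> G" | (miss) "\<forall>v\<in>G. \<not> prefix u v"
    | (below) v where "v \<in> G" "strict_prefix u v" "u \<notin> G"
    by (metis strict_prefix_def)
  then show ?case
  proof cases
    case hit
    have "0 \<le> \<delta>" using assms(3,5) by simp
    with hit have "visit_att P fb u \<le> potential P fb c u / \<gamma> powr c"
      using visit_att_le_potential_if_Unbal[OF assms(1,2) _ assms(3,6)] assms(7) less.prems(2)
      by blast
    then show ?thesis by (rule order_trans[OF sum_hit_leaves_le_visit_att[OF assms(1,2) less.prems(1)]])
  next
    case miss
    then show ?thesis using pot by (simp add: hit_leaves_def)
  next
    case below
    have "v \<in> nodes P" "length v < depth P" using below(1) assms(7) by (auto simp: Unbal_def nodes_def)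
    then have u: "length u < depth P" "u \<notin> Low P \<delta>"
      using below assms(8) prefix_length_less[OF below(2)] by (auto simp: descbar_def)
    have IH: "(\<Sum>l\<in>hit_leaves P G (u @ [b]). visit_att P fb l) \<le> potential P fb c (u @ [b]) / \<gamma> powr c" for b
      using less.IH[of "u @ [b]"] less.prems u by (simp add: no_Low_ancestor_snoc)
    have "(\<Sum>l\<in>hit_leaves P G u. visit_att P fb l)
        = (\<Sum>l\<in>hit_leaves P G (u @ [False]). visit_att P fb l) + (\<Sum>l\<in>hit_leaves P G (u @ [True]). visit_att P fb l)"
      unfolding hit_leaves_eq_Un_snoc[OF below(3) u(1)]
      by (rule sum.union_disjoint[OF finite_hit_leaves finite_hit_leaves])
        (use leaves_under_snoc_disjoint[of P u] in \<open>auto simp: hit_leaves_def\<close>)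
    also have "\<dots> \<le> (potential P fb c (u @ [False]) + potential P fb c (u @ [True])) / \<gamma> powr c"
      using add_mono[OF IH IH] by (simp add: add_divide_distrib)
    also have "\<dots> \<le> potential P fb c u / \<gamma> powr c"
      using potential_snoc_sum_le[OF assms(1-5) u] by (simp add: divide_right_mono)
    finally show ?thesis .
  qed
qed

theorem lemma4p7:
  fixes \<delta> :: real
  assumes "0 < \<delta>" and "\<delta> \<le> 1/2"
  shows "\<exists>c>0. \<forall>(P::proto) (fb::bool list \<Rightarrow> real) (\<delta>'::real) (\<gamma>::real).
           valid_proto P \<longrightarrow> (\<forall>u. length u < depth P \<longrightarrow> 0 \<le> fb u \<and> fb u \<le> 1) \<longrightarrow>
           \<delta> \<le> \<delta>' \<longrightarrow> 1 < \<gamma> \<longrightarrow>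
           (\<Sum>l\<in>leaves P \<inter> desc P (Unbal P fb \<gamma> - descbar P (Low P \<delta>')).
               visit_att P fb l) \<le> 2 / \<gamma> powr c"
proof (intro exI[of _ "\<delta> / 2"] conjI allI impI)
  fix P :: proto and fb :: "bool list \<Rightarrow> real" and \<delta>' \<gamma> :: real
  assume P: "valid_proto P" and fb: "\<forall>u. length u < depth P \<longrightarrow> 0 \<le> fb u \<and> fb u \<le> 1"
    and "\<delta> \<le> \<delta>'" and "1 < \<gamma>"
  let ?G = "Unbal P fb \<gamma> - descbar P (Low P \<delta>')"
  have "leaves P \<inter> desc P ?G = hit_leaves P ?G []"
    unfolding leaves_def desc_def nodes_def hit_leaves_def leaves_under_def by auto
  moreover have "(\<Sum>l\<in>hit_leaves P ?G []. visit_att P fb l) \<le> potential P fb (\<delta> / 2) [] / \<gamma> powr (\<delta> / 2)"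
    using assms \<open>\<delta> \<le> \<delta>'\<close> \<open>1 < \<gamma>\<close>
    by (intro sum_hit_leaves_le_potential[OF P fb, where \<delta> = \<delta>']) (auto simp: no_Low_ancestor_def)
  ultimately have "(\<Sum>l\<in>leaves P \<inter> desc P ?G. visit_att P fb l) \<le> potential P fb (\<delta> / 2) [] / \<gamma> powr (\<delta> / 2)"
    by simp
  also have "\<dots> \<le> 2 / \<gamma> powr (\<delta> / 2)"
    using val_bounds(1)[OF P, of "[]"] \<open>1 < \<gamma>\<close>
    by (intro divide_right_mono) (simp_all add: potential_def visit_def visit_att_def visit_q_def)
  finally show "(\<Sum>l\<in>leaves P \<inter> desc P ?G. visit_att P fb l) \<le> 2 / \<gamma> powr (\<delta> / 2)" .
qed (use assms in simp)

end
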